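(* Let $(U,V)$ be a jointly symmetric random vector with uniform margins and distribution function (copula) $C$, i.e. $(U,V)\stackrel{d}{=}(1-U,V)\stackrel{d}{=}(U,1-V)$. Let $T_\vee(u)=|2u-1|$ and let $C^*$ be the distribution function of $(T_\vee(U),T_\vee(V))$. Then for all $u,v\in[0,1]$, $$C(u,v)=\frac{2u+2v-1+(-1)^{\mathbf{1}\{(u-0.5)(v-0.5)<0\}}\,C^*\big(T_\vee(u),T_\vee(v)\big)}{4}.$$
   Context: $\mathbf{1}\{\cdot\}$ denotes the indicator function. *)

theory Defs
  imports "HOL-Probability.Probability"
begin

definition Tvee :: "real \<Rightarrow> real" where
  "Tvee u = \<bar>2 * u - 1\<bar>"

definition joint_cdf :: "'a measure \<Rightarrow> ('a \<Rightarrow> real) \<Rightarrow> ('a \<Rightarrow> real) \<Rightarrow> real \<Rightarrow> real \<Rightarrow> real" where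
  "joint_cdf M X Y u v = measure M {x \<in> space M. X x \<le> u \<and> Y x \<le> v}"

end

theory Submission
  imports Defs
begin

text \<open>Reflecting one coordinate gives \<open>C(1 - a, b) = b - C(a, b)\<close> and \<open>C(a, 1 - b) = a - C(a, b)\<close>,
  because the margins are uniform and have no atoms. For \<open>a, b \<le> 1/2\<close> the event defining
  \<open>C\<^sup>*(T a, T b)\<close> is the rectangle \<open>[a, 1 - a] \<times> [b, 1 - b]\<close>, whose probability is an
  alternating sum of four values of \<open>C\<close>; the reflection identities collapse it to
  \<open>1 - 2a - 2b + 4 C(a, b)\<close>. The remaining quadrants reduce to this one by reflection, and each
  reflection flips the sign in front of \<open>C\<^sup>*\<close>.\<close>

lemma Tvee_one_minus [simp]: "Tvee (1 - a) = Tvee a"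
  by (simp add: Tvee_def abs_minus_commute)

lemma Tvee_le_Tvee_iff:
  assumes "a \<le> 1/2"
  shows "Tvee t \<le> Tvee a \<longleftrightarrow> a \<le> t \<and> t \<le> 1 - a"
  using assms by (auto simp: Tvee_def abs_le_iff)

lemma prob_eq_if_distr_eq:
  assumes "distr M N f = distr M N g"
    and "f \<in> measurable M N" and "g \<in> measurable M N" and "Measurable.pred N P"
  shows "\<P>(x in M. P (f x)) = \<P>(x in M. P (g x))"
proof -
  have "\<P>(x in M. P (h x)) = measure (distr M N h) {y \<in> space N. P y}"
    if h: "h \<in> measurable M N" for h
  proof -
    have "{y \<in> space N. P y} \<in> sets N"
      using assms(4) by measurable
    then show ?thesis
      using h by (subst measure_distr)
        (auto intro!: arg_cong[where f = "measure M"] dest: measurable_space)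
  qed
  with assms show ?thesis by metis
qed

context prob_space
begin

lemma prob_uniform_le:
  fixes X :: "'a \<Rightarrow> real"
  assumes "X \<in> borel_measurable M" and "distr M lborel X = uniform_measure lborel {0..1}"
    and "a \<in> {0..1}"
  shows "\<P>(x in M. X x \<le> a) = a"
proof -
  have "\<P>(x in M. X x \<le> a) = measure (distr M lborel X) {..a}"
    using assms(1) by (subst measure_distr) (auto intro!: arg_cong[where f = "measure M"])
  also have "\<dots> = measure lborel ({0..1} \<inter> {..a})"
    using assms(2) by simp
  also have "{0..1} \<inter> {..a} = {0..a}"
    using assms(3) by auto
  finally show ?thesis
    using assms(3) by simp
qed

lemma AE_uniform_neq:
  fixes X :: "'a \<Rightarrow> real"
  assumes "X \<in> borel_measurable M" and "distr M lborel X = uniform_measure lborel {0..1}"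
  shows "AE x in M. X x \<noteq> a"
proof -
  have "AE y in distr M lborel X. y \<noteq> a"
    unfolding assms(2)
    by (intro AE_uniform_measureI eventually_mono[OF AE_lborel_singleton[of a]]) auto
  then show ?thesis
    using assms(1) by (subst (asm) AE_distr_iff) auto
qed

lemma prob_conj_ge_eq:
  fixes X :: "'a \<Rightarrow> real"
  assumes "AE x in M. X x \<noteq> a" and "X \<in> borel_measurable M" and "Measurable.pred M E"
  shows "\<P>(x in M. E x \<and> a \<le> X x) = \<P>(x in M. E x) - \<P>(x in M. E x \<and> X x \<le> a)"
proof -
  have "\<P>(x in M. E x \<and> a \<le> X x) = \<P>(x in M. E x \<and> \<not> X x \<le> a)"
    using assms by (intro prob_eq_AE) auto
  also have "\<dots> = prob ({x \<in> space M. E x} - {x \<in> space M. X x \<le> a})"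
    by (auto intro!: arg_cong[where f = prob])
  also have "\<dots> = \<P>(x in M. E x) - \<P>(x in M. E x \<and> X x \<le> a)"
    using assms(2,3) by (subst finite_measure_Diff') (auto intro!: arg_cong[where f = prob])
  finally show ?thesis .
qed

lemma prob_strip_joint_cdf:
  fixes X Y :: "'a \<Rightarrow> real"
  assumes "AE x in M. Y x \<noteq> c" and "X \<in> borel_measurable M" and "Y \<in> borel_measurable M"
    and "c \<le> d"
  shows "\<P>(x in M. X x \<le> e \<and> c \<le> Y x \<and> Y x \<le> d) = joint_cdf M X Y e d - joint_cdf M X Y e c"
proof -
  have "\<P>(x in M. X x \<le> e \<and> c \<le> Y x \<and> Y x \<le> d)
      = \<P>(x in M. (X x \<le> e \<and> Y x \<le> d) \<and> c \<le> Y x)"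
    by (auto intro!: arg_cong[where f = prob])
  also have "\<dots> = joint_cdf M X Y e d - \<P>(x in M. (X x \<le> e \<and> Y x \<le> d) \<and> Y x \<le> c)"
    using assms(1-3) unfolding joint_cdf_def by (subst prob_conj_ge_eq) auto
  also have "\<P>(x in M. (X x \<le> e \<and> Y x \<le> d) \<and> Y x \<le> c) = joint_cdf M X Y e c"
    using assms(4) unfolding joint_cdf_def by (auto intro!: arg_cong[where f = prob])
  finally show ?thesis .
qed

lemma prob_rectangle_joint_cdf:
  fixes X Y :: "'a \<Rightarrow> real"
  assumes "AE x in M. X x \<noteq> a" and "AE x in M. Y x \<noteq> c"
    and "X \<in> borel_measurable M" and "Y \<in> borel_measurable M"
    and "a \<le> b" and "c \<le> d"
  shows "\<P>(x in M. (a \<le> X x \<and> X x \<le> b) \<and> (c \<le> Y x \<and> Y x \<le> d))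
    = joint_cdf M X Y b d - joint_cdf M X Y a d - joint_cdf M X Y b c + joint_cdf M X Y a c"
proof -
  have "\<P>(x in M. (a \<le> X x \<and> X x \<le> b) \<and> (c \<le> Y x \<and> Y x \<le> d))
      = \<P>(x in M. (X x \<le> b \<and> c \<le> Y x \<and> Y x \<le> d) \<and> a \<le> X x)"
    by (auto intro!: arg_cong[where f = prob])
  also have "\<dots> = \<P>(x in M. X x \<le> b \<and> c \<le> Y x \<and> Y x \<le> d)
      - \<P>(x in M. (X x \<le> b \<and> c \<le> Y x \<and> Y x \<le> d) \<and> X x \<le> a)"
    using assms(1,3,4) by (subst prob_conj_ge_eq) auto
  also have "\<P>(x in M. (X x \<le> b \<and> c \<le> Y x \<and> Y x \<le> d) \<and> X x \<le> a)
      = \<P>(x in M. X x \<le> a \<and> c \<le> Y x \<and> Y x \<le> d)"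
    using assms(5) by (auto intro!: arg_cong[where f = prob])
  finally show ?thesis
    using assms(2-4,6) by (simp add: prob_strip_joint_cdf)
qed
end

locale jointly_symmetric_copula = prob_space M for M :: "'a measure" +
  fixes U V :: "'a \<Rightarrow> real"
  assumes measurable_U [measurable]: "U \<in> borel_measurable M"
    and measurable_V [measurable]: "V \<in> borel_measurable M"
    and distr_U: "distr M lborel U = uniform_measure lborel {0..1}"
    and distr_V: "distr M lborel V = uniform_measure lborel {0..1}"
    and reflect_fst: "distr M borel (\<lambda>x. (U x, V x)) = distr M borel (\<lambda>x. (1 - U x, V x))"
    and reflect_snd: "distr M borel (\<lambda>x. (U x, V x)) = distr M borel (\<lambda>x. (U x, 1 - V x))"
begin

abbreviation copula :: "real \<Rightarrow> real \<Rightarrow> real" where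
  "copula \<equiv> joint_cdf M U V"

abbreviation fold_copula :: "real \<Rightarrow> real \<Rightarrow> real" where
  "fold_copula \<equiv> joint_cdf M (\<lambda>x. Tvee (U x)) (\<lambda>x. Tvee (V x))"

lemma prob_reflect_fst: "\<P>(x in M. 1 - U x \<le> a \<and> V x \<le> b) = copula a b"
proof -
  have "Measurable.pred borel (\<lambda>p :: real \<times> real. fst p \<le> a \<and> snd p \<le> b)"
    unfolding borel_prod[symmetric] by measurable
  from prob_eq_if_distr_eq[OF reflect_fst _ _ this] show ?thesis
    unfolding joint_cdf_def by simp
qed

lemma prob_reflect_snd: "\<P>(x in M. U x \<le> a \<and> 1 - V x \<le> b) = copula a b"
proof -
  have "Measurable.pred borel (\<lambda>p :: real \<times> real. fst p \<le> a \<and> snd p \<le> b)"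
    unfolding borel_prod[symmetric] by measurable
  from prob_eq_if_distr_eq[OF reflect_snd _ _ this] show ?thesis
    unfolding joint_cdf_def by simp
qed

lemma copula_reflect_fst:
  assumes "b \<in> {0..1}"
  shows "copula (1 - a) b = b - copula a b"
proof -
  have "copula (1 - a) b = \<P>(x in M. V x \<le> b \<and> a \<le> U x)"
    by (simp flip: prob_reflect_fst add: conj_commute)
  also have "\<dots> = b - copula a b"
    using AE_uniform_neq[OF measurable_U distr_U] prob_uniform_le[OF measurable_V distr_V assms]
    by (subst prob_conj_ge_eq) (auto simp: joint_cdf_def conj_commute)
  finally show ?thesis .
qed

lemma copula_reflect_snd:
  assumes "a \<in> {0..1}"
  shows "copula a (1 - b) = a - copula a b"
proof -
  have "copula a (1 - b) = \<P>(x in M. U x \<le> a \<and> b \<le> V x)"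
    by (simp flip: prob_reflect_snd)
  also have "\<dots> = a - copula a b"
    using AE_uniform_neq[OF measurable_V distr_V] prob_uniform_le[OF measurable_U distr_U assms]
    by (subst prob_conj_ge_eq) (auto simp: joint_cdf_def)
  finally show ?thesis .
qed

lemma fold_copula_lower_quadrant:
  assumes "a \<in> {0..1/2}" and "b \<in> {0..1/2}"
  shows "fold_copula (Tvee a) (Tvee b) = 1 - 2 * a - 2 * b + 4 * copula a b"
proof -
  have "fold_copula (Tvee a) (Tvee b)
      = \<P>(x in M. (a \<le> U x \<and> U x \<le> 1 - a) \<and> (b \<le> V x \<and> V x \<le> 1 - b))"
    using assms by (simp add: joint_cdf_def Tvee_le_Tvee_iff)
  also have "\<dots> = copula (1 - a) (1 - b) - copula a (1 - b) - copula (1 - a) b + copula a b"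
    using assms by (intro prob_rectangle_joint_cdf AE_uniform_neq distr_U distr_V) auto
  also have "\<dots> = 1 - 2 * a - 2 * b + 4 * copula a b"
    using assms copula_reflect_fst[of "1 - b" a] copula_reflect_fst[of b a] copula_reflect_snd[of a b]
    by simp
  finally show ?thesis .
qed

lemma copula_eq_fold_copula:
  assumes "u \<in> {0..1}" and "v \<in> {0..1}"
  shows "copula u v =
    (2 * u + 2 * v - 1
     + (-1::real) ^ (of_bool ((u - 1/2) * (v - 1/2) < 0) :: nat) * fold_copula (Tvee u) (Tvee v)) / 4"
proof -
  have lower: "copula a b = (2 * a + 2 * b - 1 + fold_copula (Tvee a) (Tvee b)) / 4"
    if "a \<in> {0..1/2}" "b \<in> {0..1/2}" for a b
    using fold_copula_lower_quadrant[OF that] by simp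
  consider "u \<le> 1/2" "v \<le> 1/2" | "1/2 \<le> u" "1/2 \<le> v" | "u < 1/2" "1/2 < v" | "1/2 < u" "v < 1/2"
    by linarith
  then show ?thesis
  proof cases
    case 1
    then have "\<not> (u - 1/2) * (v - 1/2) < 0"
      by (simp add: not_less mult_nonpos_nonpos)
    with 1 assms show ?thesis
      using lower[of u v] by simp
  next
    case 2
    then have "\<not> (u - 1/2) * (v - 1/2) < 0"
      by (simp add: not_less)
    with 2 assms show ?thesis
      using lower[of "1 - u" "1 - v"] copula_reflect_fst[of v "1 - u"]
        copula_reflect_snd[of "1 - u" "1 - v"]
      by simp
  next
    case 3
    then have "(u - 1/2) * (v - 1/2) < 0"
      by (simp add: mult_neg_pos)
    with 3 assms show ?thesis
      using lower[of u "1 - v"] copula_reflect_snd[of u "1 - v"] by simp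
  next
    case 4
    then have "(u - 1/2) * (v - 1/2) < 0"
      by (simp add: mult_pos_neg)
    with 4 assms show ?thesis
      using lower[of "1 - u" v] copula_reflect_fst[of v "1 - u"] by simp
  qed
qed

end

theorem propositionC1:
  fixes M :: "'a measure" and U V :: "'a \<Rightarrow> real" and u v :: real
  assumes "prob_space M"
    and "U \<in> borel_measurable M" and "V \<in> borel_measurable M"
    and "distr M lborel U = uniform_measure lborel {0..1}"
    and "distr M lborel V = uniform_measure lborel {0..1}"
    and "distr M borel (\<lambda>x. (U x, V x)) = distr M borel (\<lambda>x. (1 - U x, V x))"
    and "distr M borel (\<lambda>x. (U x, V x)) = distr M borel (\<lambda>x. (U x, 1 - V x))"
    and "u \<in> {0..1}" and "v \<in> {0..1}"
  shows "joint_cdf M U V u v =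
     (2 * u + 2 * v - 1
      + (-1::real) ^ (of_bool ((u - 1/2) * (v - 1/2) < 0) :: nat)
        * joint_cdf M (\<lambda>x. Tvee (U x)) (\<lambda>x. Tvee (V x)) (Tvee u) (Tvee v)) / 4"
proof -
  interpret jointly_symmetric_copula M U V
    using assms(1-7) by (simp add: jointly_symmetric_copula_def jointly_symmetric_copula_axioms_def)
  show ?thesis
    using copula_eq_fold_copula assms(8,9) .
qed

end
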